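(* Let $d\ge 1$, let $D\subset\mathbb{R}^d$ be Lebesgue measurable, let $r>0$ and let $f:D\to\mathbb{R}$ be any function. Then the function $osc_r f:D\to[0,\infty]$, $$(osc_r f)(x):=\sup_{y\in B_r(x)\cap D} f(y)-\inf_{y\in B_r(x)\cap D} f(y),$$ is Lebesgue measurable.
   Context: $B_r(x):=\{y\in\mathbb{R}^d: |y-x|<r\}$ denotes the open Euclidean ball of radius $r$ centred at $x$. *)

theory Defs
  imports "HOL-Analysis.Analysis"
begin

definition osc :: "real \<Rightarrow> ('a::metric_space \<Rightarrow> real) \<Rightarrow> 'a set \<Rightarrow> 'a \<Rightarrow> ereal" where
  "osc r f D x = (SUP y\<in>ball x r \<inter> D. ereal (f y)) - (INF y\<in>ball x r \<inter> D. ereal (f y))"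

end

theory Submission
  imports Defs
begin

text \<open>The level set \<open>{x. c < sup of f on B_r(x) \<inter> D}\<close> is the union of the balls \<open>B_r(y)\<close> over
  the points \<open>y \<in> D\<close> with \<open>c < f y\<close>, hence open; dually for the infimum.  So both parts of
  the oscillation are Borel, whatever \<open>f\<close> is, and Borel functions are Lebesgue measurable.\<close>

lemma borel_measurable_SUP_ball:
  fixes g :: "'a::metric_space \<Rightarrow> ereal"
  shows "(\<lambda>x. SUP y\<in>ball x r \<inter> D. g y) \<in> borel_measurable borel"
proof (rule borel_measurableI_greater)
  fix c :: ereal
  have "{x. c < (SUP y\<in>ball x r \<inter> D. g y)} = (\<Union>y\<in>{y\<in>D. c < g y}. ball y r)"
    by (auto simp: less_SUP_iff dist_commute)
  moreover have "open (\<Union>y\<in>{y\<in>D. c < g y}. ball y r)"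
    by auto
  ultimately show "{x \<in> space borel. c < (SUP y\<in>ball x r \<inter> D. g y)} \<in> sets borel"
    by simp
qed

lemma borel_measurable_INF_ball:
  fixes g :: "'a::metric_space \<Rightarrow> ereal"
  shows "(\<lambda>x. INF y\<in>ball x r \<inter> D. g y) \<in> borel_measurable borel"
proof (rule borel_measurableI_less)
  fix c :: ereal
  have "{x. (INF y\<in>ball x r \<inter> D. g y) < c} = (\<Union>y\<in>{y\<in>D. g y < c}. ball y r)"
    by (auto simp: INF_less_iff dist_commute)
  moreover have "open (\<Union>y\<in>{y\<in>D. g y < c}. ball y r)"
    by auto
  ultimately show "{x \<in> space borel. (INF y\<in>ball x r \<inter> D. g y) < c} \<in> sets borel"
    by simp
qed

lemma borel_measurable_osc:
  fixes f :: "'a::metric_space \<Rightarrow> real"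
  shows "osc r f D \<in> borel_measurable borel"
  unfolding osc_def[abs_def]
  by (intro borel_measurable_ereal_diff borel_measurable_SUP_ball borel_measurable_INF_ball)

theorem lemma1:
  fixes D :: "'a::euclidean_space set" and f :: "'a \<Rightarrow> real" and r :: real
  assumes "D \<in> sets lebesgue" and "r > 0"
  shows "osc r f D \<in> borel_measurable (restrict_space lebesgue D)"
proof -
  have "osc r f D \<in> borel_measurable lborel"
    using borel_measurable_osc by simp
  then have "osc r f D \<in> borel_measurable lebesgue"
    by (rule measurable_completion)
  then show ?thesis
    by (rule measurable_restrict_space1)
qed

end
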